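(* Frankl's conjecture is equivalent to Nagel's conjecture.
   Context: A family $\mathcal{A}$ of sets is union-closed if $A\cup B\in\mathcal{A}$ for all $A,B\in\mathcal{A}$. Frankl's conjecture: for any finite union-closed family of finite sets, other than the family consisting only of the empty set, there exists an element that belongs to at least half of the sets in the family. Nagel's conjecture: let $\mathcal{F}\subset 2^{\{1,2,\dots,n\}}$ be a union-closed family with $\bigcup_{A\in\mathcal{F}}A=\{1,2,\dots,n\}$, where the elements of the ground set are labeled so that $|\{F\in\mathcal{F}:1\in F\}|\ge|\{F\in\mathcal{F}:2\in F\}|\ge\cdots\ge|\{F\in\mathcal{F}:n\in F\}|$; then for every $k\in\{1,2,\dots,n\}$ it holds that $|\{F\in\mathcal{F}:k\in F\}|\ge\frac{1}{2^{k-1}+1}|\mathcal{F}|$. (Under this labeling, Frankl's conjecture says $|\{F\in\mathcal{F}:1\in F\}|\ge\frac12|\mathcal{F}|$.) *)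

theory Defs
  imports Complex_Main
begin

definition union_closed :: "'a set set \<Rightarrow> bool" where
  "union_closed F \<longleftrightarrow> (\<forall>A\<in>F. \<forall>B\<in>F. A \<union> B \<in> F)"

definition occ :: "'a set set \<Rightarrow> 'a \<Rightarrow> nat" where
  "occ F x = card {A \<in> F. x \<in> A}"

text \<open>Frankl's conjecture (ground elements taken from nat; any finite family of finite sets
  can be relabelled into nat).\<close>
definition frankl_conjecture :: bool where
  "frankl_conjecture \<longleftrightarrow>
     (\<forall>F :: nat set set. finite F \<and> (\<forall>A\<in>F. finite A) \<and> union_closed F \<and> F \<noteq> {{}} \<longrightarrow>
        (\<exists>x. 2 * occ F x \<ge> card F))"

definition nagel_conjecture :: bool where
  "nagel_conjecture \<longleftrightarrow>
     (\<forall>(n::nat) (F :: nat set set).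
        F \<subseteq> Pow {1..n} \<and> union_closed F \<and> \<Union>F = {1..n} \<and>
        (\<forall>i j. 1 \<le> i \<and> i \<le> j \<and> j \<le> n \<longrightarrow> occ F j \<le> occ F i) \<longrightarrow>
        (\<forall>k\<in>{1..n}. real (occ F k) \<ge> real (card F) / (2 ^ (k - 1) + 1)))"

end

theory Submission
  imports Defs
begin

text \<open>Frankl implies Nagel: delete the \<open>k - 1\<close> most frequent elements \<open>P = {1..<k}\<close> from every
  member of \<open>F\<close>. The trimmed family is still union-closed and contains a set with \<open>k\<close>, so Frankl
  yields an element \<open>x \<ge> k\<close> lying in at least half of the trimmed sets. A trimmed set has at most
  \<open>2 ^ (k - 1)\<close> preimages, so the members of \<open>F\<close> avoiding \<open>x\<close> number at most \<open>2 ^ (k - 1)\<close> times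
  the trimmed sets avoiding \<open>x\<close>, which are at most \<open>occ F x\<close> many. Hence
  \<open>card F \<le> (2 ^ (k - 1) + 1) * occ F x \<le> (2 ^ (k - 1) + 1) * occ F k\<close>.
  Nagel implies Frankl: relabel the ground set by decreasing frequency and take \<open>k = 1\<close>.\<close>

lemma union_closed_image:
  assumes "union_closed F" and "\<And>A B. f (A \<union> B) = f A \<union> f B"
  shows "union_closed (f ` F)"
  using assms unfolding union_closed_def by (auto intro!: image_eqI simp flip: assms(2))

lemma card_eq_occ_plus_card_avoiding:
  assumes "finite F"
  shows "card F = occ F x + card {A \<in> F. x \<notin> A}"
  unfolding occ_def using assms
  by (subst card_Un_disjoint[symmetric]) (auto intro: arg_cong[where f = card])

lemma occ_image_Diff_le:
  assumes "finite F" and "x \<notin> P"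
  shows "occ ((\<lambda>A. A - P) ` F) x \<le> occ F x"
proof -
  have "{B \<in> (\<lambda>A. A - P) ` F. x \<in> B} = (\<lambda>A. A - P) ` {A \<in> F. x \<in> A}"
    using assms(2) by blast
  then show ?thesis
    unfolding occ_def using assms(1) by (simp add: card_image_le)
qed

lemma card_avoiding_le_image_Diff:
  assumes "finite F" and "finite P"
  shows "card {A \<in> F. x \<notin> A} \<le> card {B \<in> (\<lambda>A. A - P) ` F. x \<notin> B} * 2 ^ card P"
proof -
  let ?M = "{B \<in> (\<lambda>A. A - P) ` F. x \<notin> B}"
  have "{A \<in> F. x \<notin> A} \<subseteq> (\<lambda>(B, T). B \<union> T) ` (?M \<times> Pow P)"
  proof
    fix A assume "A \<in> {A \<in> F. x \<notin> A}"
    then have "(A - P, A \<inter> P) \<in> ?M \<times> Pow P" by auto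
    moreover have "A = (\<lambda>(B, T). B \<union> T) (A - P, A \<inter> P)" by auto
    ultimately show "A \<in> (\<lambda>(B, T). B \<union> T) ` (?M \<times> Pow P)" by (rule rev_image_eqI)
  qed
  then have "card {A \<in> F. x \<notin> A} \<le> card ((\<lambda>(B, T). B \<union> T) ` (?M \<times> Pow P))"
    using assms by (intro card_mono) auto
  also have "\<dots> \<le> card (?M \<times> Pow P)"
    using assms by (intro card_image_le) auto
  also have "\<dots> = card ?M * 2 ^ card P"
    using assms(2) by (simp add: card_cartesian_product card_Pow)
  finally show ?thesis .
qed

lemma card_le_occ_if_frequent_in_image_Diff:
  assumes "finite F" and "finite P" and "x \<notin> P"
    and frequent: "card ((\<lambda>A. A - P) ` F) \<le> 2 * occ ((\<lambda>A. A - P) ` F) x"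
  shows "card F \<le> occ F x * (2 ^ card P + 1)"
proof -
  let ?L = "(\<lambda>A. A - P) ` F"
  have "card {B \<in> ?L. x \<notin> B} \<le> occ ?L x"
    using card_eq_occ_plus_card_avoiding[of ?L x] assms(1) frequent by simp
  also have "\<dots> \<le> occ F x"
    using occ_image_Diff_le assms(1,3) .
  finally have "card {A \<in> F. x \<notin> A} \<le> occ F x * 2 ^ card P"
    using card_avoiding_le_image_Diff[OF assms(1,2), of x] by (meson le_trans mult_le_mono1)
  then show ?thesis
    using card_eq_occ_plus_card_avoiding[OF assms(1), of x] by simp
qed

lemma frankl_imp_nagel_bound:
  assumes frankl_conjecture
    and F: "F \<subseteq> Pow {1..n}" "union_closed F" "\<Union>F = {1..n}"
    and decreasing: "\<forall>i j. 1 \<le> i \<and> i \<le> j \<and> j \<le> n \<longrightarrow> occ F j \<le> occ F i"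
    and k: "k \<in> {1..n}"
  shows "card F \<le> occ F k * (2 ^ (k - 1) + 1)"
proof -
  define L where "L = (\<lambda>A. A - {1..<k}) ` F"
  have "finite F"
    using F(1) by (simp add: finite_subset)
  then have "finite L"
    unfolding L_def by simp
  moreover have "\<forall>B\<in>L. finite B"
    using F(1) unfolding L_def by (auto intro: finite_subset)
  moreover have "union_closed L"
    unfolding L_def using F(2) by (rule union_closed_image) blast
  moreover obtain A where A: "A \<in> F" "k \<in> A"
    using F(3) k by blast
  then have "A - {1..<k} \<in> L" "k \<in> A - {1..<k}"
    unfolding L_def by auto
  then have "L \<noteq> {{}}"
    by blast
  ultimately obtain x where x: "card L \<le> 2 * occ L x"
    using assms(1) unfolding frankl_conjecture_def by blast
  have "card L > 0"
    using \<open>finite L\<close> \<open>A - {1..<k} \<in> L\<close> card_gt_0_iff by blast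
  with x have "{B \<in> L. x \<in> B} \<noteq> {}"
    unfolding occ_def by (metis card.empty not_gr0 mult_0_right le_zero_eq)
  then obtain A' where "A' \<in> F" "x \<in> A'" "x \<notin> {1..<k}"
    unfolding L_def by blast
  then have "x \<in> {k..n}"
    using F(1) by (auto dest!: subsetD)
  then have "card F \<le> occ F x * (2 ^ (k - 1) + 1)"
    using card_le_occ_if_frequent_in_image_Diff[OF \<open>finite F\<close>, of "{1..<k}" x] x
    unfolding L_def by simp
  also have "\<dots> \<le> occ F k * (2 ^ (k - 1) + 1)"
    using decreasing k \<open>x \<in> {k..n}\<close> by (intro mult_right_mono) auto
  finally show ?thesis .
qed

lemma frankl_imp_nagel:
  assumes frankl_conjecture
  shows nagel_conjecture
  unfolding nagel_conjecture_def
proof (intro allI impI ballI)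
  fix n k and F :: "nat set set"
  assume "F \<subseteq> Pow {1..n} \<and> union_closed F \<and> \<Union>F = {1..n} \<and>
    (\<forall>i j. 1 \<le> i \<and> i \<le> j \<and> j \<le> n \<longrightarrow> occ F j \<le> occ F i)" and "k \<in> {1..n}"
  then have "card F \<le> occ F k * (2 ^ (k - 1) + 1)"
    using frankl_imp_nagel_bound[OF assms] by blast
  then have "real (card F) \<le> real (occ F k) * (2 ^ (k - 1) + 1)"
    unfolding of_nat_le_iff[where 'a = real, symmetric] by (simp add: algebra_simps)
  then show "real (card F) / (2 ^ (k - 1) + 1) \<le> real (occ F k)"
    by (simp add: divide_le_eq add_pos_pos)
qed

lemma finite_enumeration_decreasing:
  fixes f :: "'a \<Rightarrow> 'b::linorder"
  assumes "finite U"
  obtains h where "bij_betw h {1..card U} U"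
    and "\<And>i j. 1 \<le> i \<Longrightarrow> i \<le> j \<Longrightarrow> j \<le> card U \<Longrightarrow> f (h j) \<le> f (h i)"
proof -
  obtain xs where xs: "set xs = U" "distinct xs"
    using finite_distinct_list[OF assms] by blast
  define zs where "zs = rev (sort_key f xs)"
  have zs: "set zs = U" "distinct zs" "length zs = card U"
    unfolding zs_def using xs by (auto simp: distinct_card[symmetric])
  have "sorted (rev (map f zs))"
    unfolding zs_def by (simp add: rev_map[symmetric])
  then have sorted_desc: "sorted_wrt (\<ge>) (map f zs)"
    by (simp add: sorted_wrt_rev)
  define h where "h i = zs ! (i - 1)" for i
  have "bij_betw (\<lambda>i. i - 1) {1..card U} {..<length zs}"
    using zs(3) by (intro bij_betw_byWitness[where f' = Suc]) auto
  moreover have "bij_betw (nth zs) {..<length zs} U"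
    using zs(1,2) by (simp add: bij_betw_nth lessThan_atLeast0)
  ultimately have "bij_betw h {1..card U} U"
    unfolding h_def using bij_betw_trans[unfolded comp_def] by blast
  moreover have "f (h j) \<le> f (h i)" if "1 \<le> i" "i \<le> j" "j \<le> card U" for i j
    using that zs(3) sorted_desc unfolding h_def sorted_wrt_iff_nth_less
    by (cases "i = j") auto
  ultimately show thesis
    using that by blast
qed

lemma card_relabel:
  assumes "inj_on g (\<Union>F)"
  shows "card (image g ` F) = card F"
  using inj_on_subset[OF inj_on_image_Pow[OF assms]] by (intro card_image) blast

lemma occ_relabel:
  assumes "inj_on g (\<Union>F)" and "y \<in> \<Union>F"
  shows "occ (image g ` F) (g y) = occ F y"
proof -
  have "g y \<in> g ` A \<longleftrightarrow> y \<in> A" if "A \<in> F" for A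
    using inj_on_image_mem_iff[OF assms] that by blast
  then have "{B \<in> image g ` F. g y \<in> B} = image g ` {A \<in> F. y \<in> A}"
    by blast
  moreover have "inj_on g (\<Union>{A \<in> F. y \<in> A})"
    using assms(1) by (rule inj_on_subset) blast
  ultimately show ?thesis
    unfolding occ_def by (simp add: card_relabel)
qed

lemma nagel_imp_frankl_bound:
  assumes nagel_conjecture
    and F: "finite F" "\<forall>A\<in>F. finite A" "union_closed F" "\<Union>F \<noteq> {}"
  shows "\<exists>x. card F \<le> 2 * occ F x"
proof -
  define U where "U = \<Union>F"
  have "finite U"
    unfolding U_def using F(1,2) by blast
  then obtain h where h: "bij_betw h {1..card U} U"
    and decreasing: "\<And>i j. 1 \<le> i \<Longrightarrow> i \<le> j \<Longrightarrow> j \<le> card U \<Longrightarrow> occ F (h j) \<le> occ F (h i)"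
    using finite_enumeration_decreasing by blast
  define g where "g = inv_into {1..card U} h"
  have g: "bij_betw g U {1..card U}"
    unfolding g_def by (rule bij_betw_inv_into[OF h])
  have g_h: "g (h i) = i" if "i \<in> {1..card U}" for i
    unfolding g_def using h that by (simp add: bij_betw_def inv_into_f_f)
  have inj_g: "inj_on g (\<Union>F)"
    using g unfolding U_def bij_betw_def by blast
  define G where "G = image g ` F"
  have occ_G: "occ G i = occ F (h i)" if "i \<in> {1..card U}" for i
    using occ_relabel[OF inj_g, of "h i"] bij_betw_apply[OF h that] g_h[OF that]
    unfolding G_def U_def by simp
  have "\<Union>G = g ` U"
    unfolding G_def U_def by blast
  then have "G \<subseteq> Pow {1..card U}" "\<Union>G = {1..card U}"
    using g unfolding bij_betw_def by auto
  moreover have "union_closed G"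
    unfolding G_def using F(3) by (rule union_closed_image) (rule image_Un)
  moreover have "\<forall>i j. 1 \<le> i \<and> i \<le> j \<and> j \<le> card U \<longrightarrow> occ G j \<le> occ G i"
    using decreasing occ_G by simp
  moreover have "1 \<in> {1..card U}"
    using \<open>finite U\<close> F(4) unfolding U_def by (simp add: Suc_leI card_gt_0_iff)
  ultimately have "real (card G) / (2 ^ (1 - 1) + 1) \<le> real (occ G 1)"
    using assms(1) unfolding nagel_conjecture_def by blast
  then have "card G \<le> 2 * occ G 1"
    by simp
  then have "card F \<le> 2 * occ F (h 1)"
    using card_relabel[OF inj_g] occ_G[OF \<open>1 \<in> {1..card U}\<close>] unfolding G_def by linarith
  then show ?thesis ..
qed

lemma nagel_imp_frankl:
  assumes nagel_conjecture
  shows frankl_conjecture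
  unfolding frankl_conjecture_def
proof (intro allI impI)
  fix F :: "nat set set"
  assume F: "finite F \<and> (\<forall>A\<in>F. finite A) \<and> union_closed F \<and> F \<noteq> {{}}"
  show "\<exists>x. card F \<le> 2 * occ F x"
  proof (cases "F = {}")
    case False
    have "\<Union>F \<noteq> {}"
    proof
      assume "\<Union>F = {}"
      then have "F \<subseteq> {{}}"
        by blast
      with False F show False
        by blast
    qed
    then show ?thesis
      using nagel_imp_frankl_bound[OF assms] F by blast
  qed simp
qed

theorem mainTheorem2:
  shows "frankl_conjecture \<longleftrightarrow> nagel_conjecture"
  using frankl_imp_nagel nagel_imp_frankl by blast

end
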